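(* Let $P\subset\mathbb{R}^n$ be a pointed polyhedral set of dimension $n$. Then the base map $\mathrm{base}_P:P\to K_P$ is continuous.
   Context: For a polyhedral set $P$, $\mathrm{char.cone}(P)=\{y:x+y\in P\ \forall x\in P\}$; $P$ is pointed if $\mathrm{char.cone}(P)\cap-\mathrm{char.cone}(P)=\{0\}$. $K_P$ is the convex hull of the vertices of $P$. For $p\in P$, $\mathrm{base}_P(p)$ is the unique point $x\in K_P$ with $p-x\in\mathrm{char.cone}(P)$ minimizing $|p-x|$ among all such points (existence and uniqueness hold for pointed $P$). *)

theory Defs
  imports "HOL-Analysis.Analysis"
begin

definition char_cone :: "'a::real_vector set \<Rightarrow> 'a set" where
  "char_cone P = {y. \<forall>x\<in>P. x + y \<in> P}"

definition pointed :: "'a::real_vector set \<Rightarrow> bool" where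
  "pointed P \<longleftrightarrow> char_cone P \<inter> uminus ` char_cone P = {0}"

definition vertices :: "'a::real_vector set \<Rightarrow> 'a set" where
  "vertices P = {v. v extreme_point_of P}"

definition K :: "'a::real_vector set \<Rightarrow> 'a set" where
  "K P = convex hull (vertices P)"

definition base :: "'a::real_normed_vector set \<Rightarrow> 'a \<Rightarrow> 'a" where
  "base P p = (THE x. x \<in> K P \<and> p - x \<in> char_cone P \<and>
       (\<forall>y\<in>K P. p - y \<in> char_cone P \<longrightarrow> norm (p - x) \<le> norm (p - y)))"

end

theory Submission
  imports Defs
begin

(*
  Write C for the characteristic cone of P and F(q) = {x \<in> K_P. q - x \<in> C}, so that base_P q
  is the point of F(q) closest to q. By induction on the dimension, F(q) is nonempty for every
  q \<in> P: q lies on a segment between two relative boundary points of P, or on a ray from one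
  of them in a direction of C (pointedness forbids a whole line through q inside P), and the
  relative boundary points lie in proper faces, which are pointed polyhedra of lower dimension.
  The graph of F is a polyhedron, so Hoffman's error bound for linear inequalities makes F
  lower semicontinuous. Together with the closed graph of F and the compactness of K_P this
  shows that q \<mapsto> base_P q has a closed graph with compact range, hence is continuous.
*)

section \<open>The characteristic cone\<close>

lemma char_cone_add_multiple:
  assumes "y \<in> char_cone S" "x \<in> S"
  shows "x + real n *\<^sub>R y \<in> S"
proof (induction n)
  case (Suc n)
  then have "x + real n *\<^sub>R y + y \<in> S" using assms(1) by (simp add: char_cone_def)
  then show ?case by (simp add: algebra_simps)
qed (use assms in simp)

lemma zero_in_char_cone: "0 \<in> char_cone S"
  by (simp add: char_cone_def)

lemma char_cone_add: "y \<in> char_cone S \<Longrightarrow> z \<in> char_cone S \<Longrightarrow> y + z \<in> char_cone S"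
  unfolding char_cone_def by (simp add: add.assoc[symmetric])

lemma convex_char_cone:
  assumes "convex S"
  shows "convex (char_cone S)"
proof (rule convexI)
  fix y z and u v :: real
  assume yz: "y \<in> char_cone S" "z \<in> char_cone S" and uv: "0 \<le> u" "0 \<le> v" "u + v = 1"
  show "u *\<^sub>R y + v *\<^sub>R z \<in> char_cone S"
    unfolding char_cone_def
  proof (intro CollectI ballI)
    fix x assume "x \<in> S"
    then have "u *\<^sub>R (x + y) + v *\<^sub>R (x + z) \<in> S"
      using yz uv by (intro convexD[OF assms]) (auto simp: char_cone_def)
    also have "u *\<^sub>R (x + y) + v *\<^sub>R (x + z) = x + (u *\<^sub>R y + v *\<^sub>R z)"
      using uv by (simp add: algebra_simps flip: scaleR_add_left)
    finally show "x + (u *\<^sub>R y + v *\<^sub>R z) \<in> S" .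
  qed
qed

lemma char_cone_from_one_point:
  fixes S :: "'a::real_normed_vector set"
  assumes "closed S" "convex S" "x0 \<in> S" "\<And>n::nat. x0 + real n *\<^sub>R y \<in> S"
  shows "y \<in> char_cone S"
  unfolding char_cone_def
proof (intro CollectI ballI)
  fix x assume x: "x \<in> S"
  define z where "z n = (1 - 1 / real (Suc n)) *\<^sub>R x + (1 / real (Suc n)) *\<^sub>R (x0 + real (Suc n) *\<^sub>R y)"
    for n
  have zS: "z n \<in> S" for n
    unfolding z_def using x assms(4)[of "Suc n"] by (intro convexD[OF assms(2)]) auto
  have "z = (\<lambda>n. (x + y) + (1 / real (Suc n)) *\<^sub>R (x0 - x))"
    unfolding z_def scaleR_add_right scaleR_scaleR by (simp add: algebra_simps fun_eq_iff)
  moreover have "(\<lambda>n. (x + y) + (1 / real (Suc n)) *\<^sub>R (x0 - x)) \<longlonglongrightarrow> (x + y) + 0 *\<^sub>R (x0 - x)"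
    by (intro tendsto_add tendsto_const tendsto_scaleR LIMSEQ_Suc[OF lim_1_over_n])
  ultimately have "z \<longlonglongrightarrow> x + y" by simp
  then show "x + y \<in> S"
    using closed_sequentially[OF assms(1), of z, OF zS] by blast
qed

lemma char_cone_from_ray:
  fixes S :: "'a::real_normed_vector set"
  assumes "closed S" "convex S" "p \<in> S" "\<forall>s\<ge>0. p + s *\<^sub>R u \<in> S" "t \<ge> 0"
  shows "t *\<^sub>R u \<in> char_cone S"
  using assms by (intro char_cone_from_one_point[OF assms(1-3)]) simp

lemma char_cone_face_subset:
  fixes S :: "'a::real_normed_vector set"
  assumes "closed S" "convex S" "F face_of S" "F \<noteq> {}"
  shows "char_cone F \<subseteq> char_cone S"
proof
  fix y assume y: "y \<in> char_cone F"
  obtain q where q: "q \<in> F" using assms(4) by blast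
  have "F \<subseteq> S" using assms(3) by (rule face_of_imp_subset)
  then show "y \<in> char_cone S"
    using q char_cone_add_multiple[OF y q] by (intro char_cone_from_one_point[OF assms(1,2)]) auto
qed

lemma pointed_iff: "pointed S \<longleftrightarrow> (\<forall>y. y \<in> char_cone S \<longrightarrow> - y \<in> char_cone S \<longrightarrow> y = 0)"
proof -
  have "y \<in> uminus ` char_cone S \<longleftrightarrow> - y \<in> char_cone S" for y
    by (force intro: image_eqI[of _ uminus "- y"])
  then show ?thesis
    unfolding pointed_def using zero_in_char_cone by auto
qed

lemma pointed_char_cone_mono: "char_cone T \<subseteq> char_cone S \<Longrightarrow> pointed S \<Longrightarrow> pointed T"
  by (auto simp: pointed_iff)

lemma polyhedron_halfspace_repr:
  fixes S :: "'a::euclidean_space set"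
  assumes "polyhedron S"
  obtains F :: "'a set set" and a b where "finite F" "S = {x. \<forall>h\<in>F. a h \<bullet> x \<le> b h}"
proof -
  obtain F where F: "finite F" "S = \<Inter>F" "\<forall>h\<in>F. \<exists>ab. h = {x. fst ab \<bullet> x \<le> snd ab}"
    using assms unfolding polyhedron_def by fastforce
  from bchoice[OF F(3)] obtain ab where "\<forall>h\<in>F. h = {x. fst (ab h) \<bullet> x \<le> snd (ab h)}"
    by blast
  then have "x \<in> h \<longleftrightarrow> fst (ab h) \<bullet> x \<le> snd (ab h)" if "h \<in> F" for h x
    using that by blast
  with F show ?thesis by (intro that[of F "fst \<circ> ab" "snd \<circ> ab"]) auto
qed

lemma polyhedron_halfspace_system:
  fixes a :: "'i \<Rightarrow> 'a::euclidean_space"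
  assumes "finite F"
  shows "polyhedron {x. \<forall>h\<in>F. a h \<bullet> x \<le> b h}"
proof -
  have "{x. \<forall>h\<in>F. a h \<bullet> x \<le> b h} = (\<Inter>h\<in>F. {x. a h \<bullet> x \<le> b h})" by blast
  then show ?thesis using assms by (auto simp: polyhedron_halfspace_le)
qed

lemma char_cone_halfspaces:
  fixes a :: "'i \<Rightarrow> 'a::real_inner"
  assumes "S = {x. \<forall>h\<in>F. a h \<bullet> x \<le> b h}" "S \<noteq> {}"
  shows "char_cone S = {y. \<forall>h\<in>F. a h \<bullet> y \<le> 0}"
proof (intro set_eqI iffI)
  fix y assume y: "y \<in> char_cone S"
  obtain x0 where x0: "x0 \<in> S" using assms(2) by blast
  have "a h \<bullet> y \<le> 0" if h: "h \<in> F" for h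
  proof (rule ccontr)
    assume "\<not> a h \<bullet> y \<le> 0"
    then obtain n :: nat where "b h - a h \<bullet> x0 < real n * (a h \<bullet> y)"
      using reals_Archimedean3[of "a h \<bullet> y"] by auto
    moreover have "a h \<bullet> (x0 + real n *\<^sub>R y) \<le> b h"
      using char_cone_add_multiple[OF y x0] h assms(1) by blast
    ultimately show False by (simp add: inner_add_right)
  qed
  then show "y \<in> {y. \<forall>h\<in>F. a h \<bullet> y \<le> 0}" by blast
next
  fix y assume y: "y \<in> {y. \<forall>h\<in>F. a h \<bullet> y \<le> 0}"
  have "a h \<bullet> (x + y) \<le> b h" if "x \<in> S" "h \<in> F" for x h
  proof -
    have "a h \<bullet> x \<le> b h" "a h \<bullet> y \<le> 0" using that y assms(1) by auto
    then show ?thesis by (simp add: inner_add_right)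
  qed
  then show "y \<in> char_cone S"
    using assms(1) by (auto simp: char_cone_def)
qed

lemma polyhedron_char_cone:
  fixes S :: "'a::euclidean_space set"
  assumes "polyhedron S"
  shows "polyhedron (char_cone S)"
proof (cases "S = {}")
  case True
  then show ?thesis by (simp add: char_cone_def)
next
  case False
  obtain F :: "'a set set" and a b where "finite F" "S = {x. \<forall>h\<in>F. a h \<bullet> x \<le> b h}"
    using polyhedron_halfspace_repr[OF assms] .
  then show ?thesis
    using False by (simp add: char_cone_halfspaces polyhedron_halfspace_system)
qed

lemma polyhedron_linear_vimage:
  fixes f :: "'a::euclidean_space \<Rightarrow> 'b::euclidean_space"
  assumes "linear f" "polyhedron S"
  shows "polyhedron (f -` S)"
proof -
  obtain F :: "'b set set" and a b where F: "finite F" "S = {x. \<forall>h\<in>F. a h \<bullet> x \<le> b h}"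
    using polyhedron_halfspace_repr[OF assms(2)] .
  have "f -` S = {x. \<forall>h\<in>F. adjoint f (a h) \<bullet> x \<le> b h}"
    using adjoint_works[OF assms(1)] by (auto simp: F(2) inner_commute)
  then show ?thesis using F(1) by (simp add: polyhedron_halfspace_system)
qed

section \<open>Decomposition of a pointed polyhedron\<close>

lemma ray_meets_rel_frontier:
  fixes S :: "'a::euclidean_space set"
  assumes "closed S" "convex S" "p \<in> S" "\<And>s. p + s *\<^sub>R u \<in> affine hull S"
    and "t1 \<ge> 0" "p + t1 *\<^sub>R u \<notin> S"
  shows "\<exists>t\<ge>0. p + t *\<^sub>R u \<in> rel_frontier S"
proof -
  have u0: "u \<noteq> 0" using assms(3,6) by auto
  define T where "T = {t. 0 \<le> t \<and> p + t *\<^sub>R u \<in> S}"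
  have "0 \<in> T" using assms(3) by (simp add: T_def)
  have T_le: "t \<le> t1" if "t \<in> T" for t
  proof (rule ccontr)
    assume "\<not> t \<le> t1"
    then have t: "t1 < t" "0 < t" using assms(5) by auto
    have "(1 - t1 / t) *\<^sub>R p + (t1 / t) *\<^sub>R (p + t *\<^sub>R u) \<in> S"
      using t assms(5) that by (intro convexD[OF assms(2,3)]) (auto simp: T_def field_simps)
    moreover have "(1 - t1 / t) *\<^sub>R p + (t1 / t) *\<^sub>R (p + t *\<^sub>R u) = p + t1 *\<^sub>R u"
      using t by (simp add: scaleR_add_right algebra_simps)
    ultimately show False using assms(6) by simp
  qed
  then have bdd: "bdd_above T" by (auto simp: bdd_above_def)
  have "T = {t. 0 \<le> t} \<inter> (\<lambda>t. p + t *\<^sub>R u) -` S" by (auto simp: T_def)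
  moreover have "closed ((\<lambda>t. p + t *\<^sub>R u) -` S)"
    by (intro continuous_closed_vimage assms(1) continuous_intros)
  ultimately have "closed T" by (simp add: closed_Int closed_Collect_le)
  define t0 where "t0 = Sup T"
  have "t0 \<in> T" unfolding t0_def using closed_contains_Sup[OF _ bdd \<open>closed T\<close>] \<open>0 \<in> T\<close> by blast
  have "p + t0 *\<^sub>R u \<notin> rel_interior S"
  proof
    assume "p + t0 *\<^sub>R u \<in> rel_interior S"
    then obtain e where e: "e > 0" "ball (p + t0 *\<^sub>R u) e \<inter> affine hull S \<subseteq> S"
      by (auto simp: mem_rel_interior_ball)
    define t where "t = t0 + e / (2 * norm u)"
    have "dist (p + t0 *\<^sub>R u) (p + t *\<^sub>R u) = e / 2"
      using u0 e by (simp add: t_def dist_norm flip: scaleR_diff_left)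
    then have "t \<in> T"
      using e assms(4)[of t] u0 \<open>t0 \<in> T\<close> by (auto simp: T_def t_def)
    then have "t \<le> t0" unfolding t0_def by (rule cSup_upper[OF _ bdd])
    moreover have "e / (2 * norm u) > 0" using u0 e by simp
    ultimately show False by (simp add: t_def)
  qed
  then show ?thesis
    using \<open>t0 \<in> T\<close> assms(1) by (auto simp: T_def rel_frontier_def)
qed

lemma ray_in_or_meets_rel_frontier:
  fixes S :: "'a::euclidean_space set"
  assumes "closed S" "convex S" "p \<in> S" "y \<in> S" "v = y - p \<or> v = p - y"
  shows "(\<forall>s\<ge>0. p + s *\<^sub>R v \<in> S) \<or> (\<exists>t\<ge>0. p + t *\<^sub>R v \<in> rel_frontier S)"
proof -
  have "p + s *\<^sub>R (y - p) \<in> affine hull S" for s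
  proof -
    have "(1 - s) *\<^sub>R p + s *\<^sub>R y \<in> affine hull S"
      using assms(3,4) by (intro mem_affine[OF affine_affine_hull] hull_inc) auto
    then show ?thesis by (simp add: algebra_simps)
  qed
  then have "p + s *\<^sub>R v \<in> affine hull S" for s
    using assms(5) by (metis minus_diff_eq scaleR_minus_left scaleR_minus_right)
  then show ?thesis using ray_meets_rel_frontier[OF assms(1-3)] by blast
qed

lemma K_face_subset: "F face_of S \<Longrightarrow> K F \<subseteq> K S"
  unfolding K_def vertices_def by (intro hull_mono) (auto dest: extreme_point_of_face)

lemma convex_char_cone_sums:
  fixes B S :: "'a::real_vector set"
  assumes "convex B" "convex S"
  shows "convex {p. \<exists>x\<in>B. p - x \<in> char_cone S}"
proof (rule convexI)
  fix p1 p2 and u v :: real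
  assume "p1 \<in> {p. \<exists>x\<in>B. p - x \<in> char_cone S}" "p2 \<in> {p. \<exists>x\<in>B. p - x \<in> char_cone S}"
    and uv: "0 \<le> u" "0 \<le> v" "u + v = 1"
  then obtain x1 x2 where x: "x1 \<in> B" "p1 - x1 \<in> char_cone S" "x2 \<in> B" "p2 - x2 \<in> char_cone S"
    by blast
  have "u *\<^sub>R x1 + v *\<^sub>R x2 \<in> B" using x uv by (intro convexD[OF assms(1)]) auto
  moreover have "u *\<^sub>R (p1 - x1) + v *\<^sub>R (p2 - x2) \<in> char_cone S"
    using x uv by (intro convexD[OF convex_char_cone[OF assms(2)]]) auto
  moreover have "u *\<^sub>R (p1 - x1) + v *\<^sub>R (p2 - x2) = (u *\<^sub>R p1 + v *\<^sub>R p2) - (u *\<^sub>R x1 + v *\<^sub>R x2)"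
    by (simp add: algebra_simps)
  ultimately show "u *\<^sub>R p1 + v *\<^sub>R p2 \<in> {p. \<exists>x\<in>B. p - x \<in> char_cone S}" by auto
qed

lemma pointed_no_line:
  fixes S :: "'a::real_normed_vector set"
  assumes "closed S" "convex S" "pointed S" "p \<in> S"
    and "\<forall>s\<ge>0. p + s *\<^sub>R u \<in> S" "\<forall>s\<ge>0. p + s *\<^sub>R (- u) \<in> S"
  shows "u = 0"
proof -
  have "1 *\<^sub>R u \<in> char_cone S" "1 *\<^sub>R (- u) \<in> char_cone S"
    by (rule char_cone_from_ray[OF assms(1,2,4) assms(5)], simp,
        rule char_cone_from_ray[OF assms(1,2,4) assms(6)], simp)
  then show ?thesis using \<open>pointed S\<close> by (simp add: pointed_iff)
qed

lemma char_cone_decomposition_from_rel_frontier: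
  fixes S B :: "'a::euclidean_space set"
  assumes "closed S" "convex S" "convex B" "pointed S"
    and frontier: "\<And>q. q \<in> rel_frontier S \<Longrightarrow> \<exists>x\<in>B. q - x \<in> char_cone S"
    and p: "p \<in> S" "S \<noteq> {p}"
  shows "\<exists>x\<in>B. p - x \<in> char_cone S"
proof -
  define D where "D = {q. \<exists>x\<in>B. q - x \<in> char_cone S}"
  obtain y where "y \<in> S" "y \<noteq> p" using p by blast
  define u where "u = y - p"
  have ray: "(\<forall>s\<ge>0. p + s *\<^sub>R v \<in> S) \<or> (\<exists>t\<ge>0. p + t *\<^sub>R v \<in> rel_frontier S)"
    if "v = u \<or> v = - u" for v
    using ray_in_or_meets_rel_frontier[OF assms(1,2) p(1) \<open>y \<in> S\<close>] that by (auto simp: u_def)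
  have "u \<noteq> 0" using \<open>y \<noteq> p\<close> by (simp add: u_def)
  then have "\<not> ((\<forall>s\<ge>0. p + s *\<^sub>R u \<in> S) \<and> (\<forall>s\<ge>0. p + s *\<^sub>R (- u) \<in> S))"
    using pointed_no_line[OF assms(1,2,4) p(1)] by blast
  then obtain v t1 where v: "v = u \<or> v = - u" "t1 \<ge> 0" "p + t1 *\<^sub>R v \<in> rel_frontier S"
    using ray[of u] ray[of "- u"] by blast
  then have "p + t1 *\<^sub>R v \<in> D" using frontier by (simp add: D_def)
  consider "\<forall>s\<ge>0. p + s *\<^sub>R (- v) \<in> S" | t2 where "t2 \<ge> 0" "p + t2 *\<^sub>R (- v) \<in> rel_frontier S"
    using ray[of "- v"] v(1) by auto
  then show ?thesis
  proof cases
    case 1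
    then have "t1 *\<^sub>R (- v) \<in> char_cone S" by (rule char_cone_from_ray[OF assms(1,2) p(1) _ v(2)])
    moreover obtain x where "x \<in> B" "p + t1 *\<^sub>R v - x \<in> char_cone S"
      using \<open>p + t1 *\<^sub>R v \<in> D\<close> by (auto simp: D_def)
    moreover have "p - x = (p + t1 *\<^sub>R v - x) + t1 *\<^sub>R (- v)" by (simp add: algebra_simps)
    ultimately show ?thesis by (metis char_cone_add)
  next
    case 2
    then have "p + t2 *\<^sub>R (- v) \<in> D" using frontier by (simp add: D_def)
    show ?thesis
    proof (cases "t1 + t2 = 0")
      case True
      then have "t1 = 0" using v(2) 2(1) by arith
      then show ?thesis using \<open>p + t1 *\<^sub>R v \<in> D\<close> by (simp add: D_def)
    next
      case False
      define l where "l = t2 / (t1 + t2)"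
      have l: "0 \<le> l" "l \<le> 1" "l * t1 = (1 - l) * t2"
        using False v(2) 2(1) by (auto simp: l_def field_simps add_nonneg_eq_0_iff)
      then have "p = l *\<^sub>R (p + t1 *\<^sub>R v) + (1 - l) *\<^sub>R (p + t2 *\<^sub>R (- v))"
        by (simp add: algebra_simps) (metis scaleR_add_left scaleR_scaleR)
      also have "\<dots> \<in> D"
        using l \<open>p + t1 *\<^sub>R v \<in> D\<close> \<open>p + t2 *\<^sub>R (- v) \<in> D\<close> unfolding D_def
        by (intro convexD[OF convex_char_cone_sums[OF assms(3,2)]]) auto
      finally show ?thesis by (simp add: D_def)
    qed
  qed
qed

lemma pointed_polyhedron_decomposition:
  fixes S :: "'a::euclidean_space set"
  assumes "polyhedron S" "pointed S" "p \<in> S"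
  shows "\<exists>x\<in>K S. p - x \<in> char_cone S"
  using assms
proof (induction "nat (aff_dim S)" arbitrary: S p rule: less_induct)
  case less
  have cl: "closed S" and cv: "convex S"
    using less.prems(1) by (simp_all add: polyhedron_imp_closed polyhedron_imp_convex)
  show ?case
  proof (cases "S = {p}")
    case True
    then have "p \<in> K S" by (simp add: K_def vertices_def hull_inc)
    then show ?thesis using zero_in_char_cone by force
  next
    case False
    show ?thesis
    proof (rule char_cone_decomposition_from_rel_frontier[OF cl cv _ less.prems(2) _ less.prems(3) False])
      show "convex (K S)" by (simp add: K_def convex_convex_hull)
      fix q assume "q \<in> rel_frontier S"
      then obtain F where F: "F face_of S" "F \<noteq> S" "q \<in> F"
        using rel_frontier_of_polyhedron_alt[OF less.prems(1)] by blast
      have cc: "char_cone F \<subseteq> char_cone S"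
        using char_cone_face_subset[OF cl cv F(1)] F(3) by blast
      have "aff_dim F < aff_dim S" by (rule face_of_aff_dim_lt[OF cv F(1,2)])
      moreover have "aff_dim F \<ge> 0" using F(3) aff_dim_negative_iff[of F] by (metis empty_iff not_less)
      ultimately have "nat (aff_dim F) < nat (aff_dim S)" by arith
      then obtain x where "x \<in> K F" "q - x \<in> char_cone F"
        using less.hyps face_of_polyhedron_polyhedron[OF less.prems(1) F(1)]
          pointed_char_cone_mono[OF cc less.prems(2)] F(3) by blast
      then show "\<exists>x\<in>K S. q - x \<in> char_cone S"
        using K_face_subset[OF F(1)] cc by blast
    qed
  qed
qed

section \<open>Hoffman's error bound and lower semicontinuity\<close>

lemma orthogonal_kernel_norm_bound:
  fixes \<alpha> :: "'i \<Rightarrow> 'a::euclidean_space"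
  assumes "finite L"
  shows "\<exists>c\<ge>0. \<forall>v. (\<forall>u. (\<forall>i\<in>L. \<alpha> i \<bullet> u = 0) \<longrightarrow> v \<bullet> u = 0) \<longrightarrow>
    norm v \<le> c * (\<Sum>i\<in>L. \<bar>\<alpha> i \<bullet> v\<bar>)"
proof -
  define V where "V = {v. \<forall>u. (\<forall>i\<in>L. \<alpha> i \<bullet> u = 0) \<longrightarrow> v \<bullet> u = 0}"
  define f where "f v = (\<Sum>i\<in>L. (\<alpha> i \<bullet> v) *\<^sub>R \<alpha> i)" for v
  have "V = (\<Inter>u\<in>{u. \<forall>i\<in>L. \<alpha> i \<bullet> u = 0}. {v. u \<bullet> v = 0})"
    by (auto simp: V_def inner_commute)
  then have "closed V" by (simp add: closed_INT closed_hyperplane)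
  moreover have "subspace V" by (auto simp: subspace_def V_def inner_add_left)
  moreover have "bounded_linear f" unfolding f_def by (intro bounded_linear_intros)
  moreover have "v = 0" if "v \<in> V" "f v = 0" for v
  proof -
    have "(\<Sum>i\<in>L. (\<alpha> i \<bullet> v)\<^sup>2) = v \<bullet> f v"
      by (simp add: f_def inner_sum_right power2_eq_square inner_commute)
    then have "\<forall>i\<in>L. \<alpha> i \<bullet> v = 0" using that(2) assms by (simp add: sum_nonneg_eq_0_iff)
    then have "v \<bullet> v = 0" using that(1) unfolding V_def by blast
    then show "v = 0" by simp
  qed
  ultimately obtain e where e: "e > 0" "\<And>v. v \<in> V \<Longrightarrow> e * norm v \<le> norm (f v)"
    using injective_imp_isometric[of V f] by blast
  define M where "M = (\<Sum>i\<in>L. norm (\<alpha> i))"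
  have "norm (f v) \<le> M * (\<Sum>i\<in>L. \<bar>\<alpha> i \<bullet> v\<bar>)" for v
  proof -
    have "norm (f v) \<le> (\<Sum>i\<in>L. \<bar>\<alpha> i \<bullet> v\<bar> * norm (\<alpha> i))"
      unfolding f_def by (rule order_trans[OF norm_sum]) simp
    also have "\<dots> \<le> (\<Sum>i\<in>L. \<bar>\<alpha> i \<bullet> v\<bar> * M)"
      unfolding M_def using assms by (intro sum_mono mult_left_mono member_le_sum) auto
    finally show ?thesis by (simp add: sum_distrib_left mult.commute)
  qed
  then have "norm v \<le> M / e * (\<Sum>i\<in>L. \<bar>\<alpha> i \<bullet> v\<bar>)" if "v \<in> V" for v
    using e(2)[OF that] e(1) by (simp add: field_simps) (meson order_trans)
  moreover have "M / e \<ge> 0" using e(1) by (simp add: M_def sum_nonneg)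
  ultimately show ?thesis by (auto simp: V_def)
qed

lemma eventually_strict_halfspaces:
  fixes a :: "'i \<Rightarrow> 'a::real_inner"
  assumes "finite J" "\<forall>i\<in>J. a i \<bullet> x < d i"
  shows "\<forall>\<^sub>F y in nhds x. \<forall>i\<in>J. a i \<bullet> y < d i"
proof (intro eventually_ball_finite[OF assms(1)] ballI)
  fix i assume "i \<in> J"
  then show "\<forall>\<^sub>F y in nhds x. a i \<bullet> y < d i"
    using eventually_nhds_in_open[OF open_halfspace_lt, of x] assms(2) by auto
qed

lemma closest_point_orthogonal_active_kernel:
  fixes \<alpha> :: "'i \<Rightarrow> 'a::euclidean_space"
  assumes "finite J" and T: "T = {w. \<forall>i\<in>J. \<alpha> i \<bullet> w \<le> d i}" "T \<noteq> {}"
    and u: "\<And>i. i \<in> J \<Longrightarrow> \<alpha> i \<bullet> closest_point T 0 = d i \<Longrightarrow> \<alpha> i \<bullet> u = 0"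
  shows "closest_point T 0 \<bullet> u = 0"
proof -
  define w0 where "w0 = closest_point T 0"
  define J1 where "J1 = {i\<in>J. \<alpha> i \<bullet> w0 < d i}"
  have "closed T" "convex T"
    using polyhedron_halfspace_system[OF assms(1), of \<alpha> d]
    by (simp_all add: T(1) polyhedron_imp_closed polyhedron_imp_convex)
  then have w0: "w0 \<in> T" "\<forall>y\<in>T. dist 0 w0 \<le> dist 0 y"
    using closest_point_exists[OF _ T(2), of 0] by (auto simp: w0_def)
  have "\<forall>\<^sub>F y in nhds w0. \<forall>i\<in>J1. \<alpha> i \<bullet> y < d i"
    using assms(1) by (intro eventually_strict_halfspaces) (auto simp: J1_def)
  moreover have "((\<lambda>t. w0 + t *\<^sub>R u) \<longlongrightarrow> w0) (nhds 0)"
    by (auto intro!: tendsto_eq_intros filterlim_ident)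
  ultimately have "\<forall>\<^sub>F t in nhds 0. \<forall>i\<in>J1. \<alpha> i \<bullet> (w0 + t *\<^sub>R u) < d i"
    by (rule eventually_compose_filterlim)
  then obtain \<delta> where "\<delta> > 0" and \<delta>: "\<And>t. \<bar>t\<bar> < \<delta> \<Longrightarrow> \<forall>i\<in>J1. \<alpha> i \<bullet> (w0 + t *\<^sub>R u) < d i"
    unfolding eventually_nhds_metric dist_real_def by auto
  have "w0 + t *\<^sub>R u \<in> T" if "\<bar>t\<bar> < \<delta>" for t
    unfolding T(1)
  proof (intro CollectI ballI)
    fix i assume "i \<in> J"
    then consider "\<alpha> i \<bullet> w0 = d i" | "i \<in> J1" using w0(1) by (force simp: T(1) J1_def)
    then show "\<alpha> i \<bullet> (w0 + t *\<^sub>R u) \<le> d i"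
    proof cases
      case 1
      then show ?thesis using u[OF \<open>i \<in> J\<close>] by (simp add: w0_def inner_add_right)
    next
      case 2
      then show ?thesis using \<delta>[OF that] by (simp add: less_imp_le)
    qed
  qed
  then have "(0 - w0) \<bullet> ((w0 + t *\<^sub>R u) - w0) \<le> 0" if "\<bar>t\<bar> < \<delta>" for t
    using any_closest_point_dot[OF \<open>convex T\<close> \<open>closed T\<close> w0(1) _ w0(2)] that by blast
  from this[of "\<delta> / 2"] this[of "- \<delta> / 2"] show ?thesis
    using \<open>\<delta> > 0\<close> by (simp add: w0_def zero_le_mult_iff mult_le_0_iff)
qed

lemma hoffman_bound:
  fixes \<alpha> :: "'i \<Rightarrow> 'a::euclidean_space"
  assumes "finite J"
  obtains c where "c \<ge> 0" "\<And>d. \<exists>w. \<forall>i\<in>J. \<alpha> i \<bullet> w \<le> d i \<Longrightarrow>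
      \<exists>w. (\<forall>i\<in>J. \<alpha> i \<bullet> w \<le> d i) \<and> norm w \<le> c * (\<Sum>i\<in>J. \<bar>d i\<bar>)"
proof -
  have "\<exists>c. L \<subseteq> J \<longrightarrow> c \<ge> 0 \<and> (\<forall>v. (\<forall>u. (\<forall>i\<in>L. \<alpha> i \<bullet> u = 0) \<longrightarrow> v \<bullet> u = 0) \<longrightarrow>
      norm v \<le> c * (\<Sum>i\<in>L. \<bar>\<alpha> i \<bullet> v\<bar>))" for L
    using orthogonal_kernel_norm_bound[of L \<alpha>] assms finite_subset by blast
  then obtain cf where cf: "\<And>L. L \<subseteq> J \<Longrightarrow> cf L \<ge> 0"
    "\<And>L v. L \<subseteq> J \<Longrightarrow> \<forall>u. (\<forall>i\<in>L. \<alpha> i \<bullet> u = 0) \<longrightarrow> v \<bullet> u = 0 \<Longrightarrow>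
        norm v \<le> cf L * (\<Sum>i\<in>L. \<bar>\<alpha> i \<bullet> v\<bar>)"
    by metis
  \<comment> \<open>The constant needed for a right-hand side d is that of the constraints active at the
    least-norm solution, so the sum over all subsystems works for every d.\<close>
  define c where "c = (\<Sum>L\<in>Pow J. cf L)"
  have "c \<ge> 0" unfolding c_def using cf(1) by (intro sum_nonneg) auto
  moreover have "\<exists>w. (\<forall>i\<in>J. \<alpha> i \<bullet> w \<le> d i) \<and> norm w \<le> c * (\<Sum>i\<in>J. \<bar>d i\<bar>)"
    if "\<exists>w. \<forall>i\<in>J. \<alpha> i \<bullet> w \<le> d i" for d
  proof -
    define T where "T = {w. \<forall>i\<in>J. \<alpha> i \<bullet> w \<le> d i}"
    define w0 where "w0 = closest_point T 0"
    define J0 where "J0 = {i\<in>J. \<alpha> i \<bullet> w0 = d i}"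
    have "T \<noteq> {}" using that by (simp add: T_def)
    moreover have "closed T"
      using polyhedron_halfspace_system[OF assms, of \<alpha> d] by (simp add: T_def polyhedron_imp_closed)
    ultimately have "w0 \<in> T" by (simp add: w0_def closest_point_in_set)
    have "norm w0 \<le> cf J0 * (\<Sum>i\<in>J0. \<bar>\<alpha> i \<bullet> w0\<bar>)"
      using closest_point_orthogonal_active_kernel[OF assms T_def \<open>T \<noteq> {}\<close>]
      by (intro cf(2)) (auto simp: J0_def w0_def)
    also have "\<dots> = cf J0 * (\<Sum>i\<in>J0. \<bar>d i\<bar>)" by (simp add: J0_def)
    also have "\<dots> \<le> c * (\<Sum>i\<in>J. \<bar>d i\<bar>)"
      unfolding c_def using assms cf(1)
      by (intro mult_mono member_le_sum sum_mono2 sum_nonneg) (auto simp: J0_def)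
    finally show ?thesis using \<open>w0 \<in> T\<close> by (auto simp: T_def)
  qed
  ultimately show ?thesis using that by blast
qed

lemma hoffman_perturbation:
  fixes \<alpha> :: "'i \<Rightarrow> 'a::euclidean_space"
  assumes c: "\<And>d. \<exists>w. \<forall>i\<in>J. \<alpha> i \<bullet> w \<le> d i \<Longrightarrow>
      \<exists>w. (\<forall>i\<in>J. \<alpha> i \<bullet> w \<le> d i) \<and> norm w \<le> c * (\<Sum>i\<in>J. \<bar>d i\<bar>)"
    and "J \<subseteq> I" and active: "\<forall>i\<in>J. \<alpha> i \<bullet> x = g i"
    and slack: "\<forall>i\<in>I - J. \<alpha> i \<bullet> x \<le> h i - norm (\<alpha> i) * (c * (\<Sum>i\<in>J. \<bar>h i - g i\<bar>))"
    and z: "\<forall>i\<in>I. \<alpha> i \<bullet> z \<le> h i"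
  shows "\<exists>x'. (\<forall>i\<in>I. \<alpha> i \<bullet> x' \<le> h i) \<and> norm (x' - x) \<le> c * (\<Sum>i\<in>J. \<bar>h i - g i\<bar>)"
proof -
  have "\<forall>i\<in>J. \<alpha> i \<bullet> (z - x) \<le> h i - g i"
    using z active \<open>J \<subseteq> I\<close> by (auto simp: inner_diff_right)
  then obtain w where w: "\<forall>i\<in>J. \<alpha> i \<bullet> w \<le> h i - g i" "norm w \<le> c * (\<Sum>i\<in>J. \<bar>h i - g i\<bar>)"
    using c[of "\<lambda>i. h i - g i"] by blast
  have "\<alpha> i \<bullet> (x + w) \<le> h i" if "i \<in> I" for i
  proof (cases "i \<in> J")
    case True
    then show ?thesis using w(1) active by (auto simp: inner_add_right)
  next
    case False
    have "\<alpha> i \<bullet> w \<le> norm (\<alpha> i) * (c * (\<Sum>i\<in>J. \<bar>h i - g i\<bar>))"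
      using norm_cauchy_schwarz[of "\<alpha> i" w] w(2) by (meson mult_left_mono norm_ge_zero order_trans)
    moreover have "\<alpha> i \<bullet> x \<le> h i - norm (\<alpha> i) * (c * (\<Sum>i\<in>J. \<bar>h i - g i\<bar>))"
      using slack that False by blast
    ultimately show ?thesis by (simp add: inner_add_right)
  qed
  then show ?thesis using w(2) by (intro exI[of _ "x + w"]) simp
qed

lemma affine_system_solutions_lsc:
  fixes \<alpha> :: "'i \<Rightarrow> 'a::euclidean_space" and \<beta> :: "'i \<Rightarrow> 'b::euclidean_space"
  assumes "finite I" and x: "\<forall>i\<in>I. \<alpha> i \<bullet> x \<le> \<beta> i \<bullet> p + \<gamma> i" and "e > 0"
  shows "\<forall>\<^sub>F q in nhds p. (\<exists>z. \<forall>i\<in>I. \<alpha> i \<bullet> z \<le> \<beta> i \<bullet> q + \<gamma> i) \<longrightarrow>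
           (\<exists>x'. (\<forall>i\<in>I. \<alpha> i \<bullet> x' \<le> \<beta> i \<bullet> q + \<gamma> i) \<and> dist x' x < e)"
proof -
  \<comment> \<open>Only the constraints J active at x need correcting, by a vector of size at most D q;
    near p the other constraints keep enough slack to absorb it.\<close>
  define f where "f i q = \<beta> i \<bullet> q + \<gamma> i" for i q
  define J where "J = {i\<in>I. \<alpha> i \<bullet> x = f i p}"
  have "finite J" "J \<subseteq> I" using assms(1) by (auto simp: J_def)
  obtain c where c: "\<And>d. \<exists>w. \<forall>i\<in>J. \<alpha> i \<bullet> w \<le> d i \<Longrightarrow>
      \<exists>w. (\<forall>i\<in>J. \<alpha> i \<bullet> w \<le> d i) \<and> norm w \<le> c * (\<Sum>i\<in>J. \<bar>d i\<bar>)"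
    using hoffman_bound[OF \<open>finite J\<close>, of \<alpha>] by blast
  define D where "D q = c * (\<Sum>i\<in>J. \<bar>f i q - f i p\<bar>)" for q
  have f: "(f i \<longlongrightarrow> f i p) (nhds p)" for i
    unfolding f_def by (intro tendsto_intros filterlim_ident)
  have D: "(D \<longlongrightarrow> 0) (nhds p)"
    unfolding D_def by (auto intro!: tendsto_eq_intros f)
  have "\<forall>\<^sub>F q in nhds p. \<alpha> i \<bullet> x < f i q - norm (\<alpha> i) * D q" if "i \<in> I - J" for i
  proof (rule order_tendstoD(1))
    show "((\<lambda>q. f i q - norm (\<alpha> i) * D q) \<longlongrightarrow> f i p - norm (\<alpha> i) * 0) (nhds p)"
      by (intro tendsto_intros f D)
    show "\<alpha> i \<bullet> x < f i p - norm (\<alpha> i) * 0" using x that by (auto simp: J_def f_def less_le)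
  qed
  then have "\<forall>\<^sub>F q in nhds p. \<forall>i\<in>I - J. \<alpha> i \<bullet> x < f i q - norm (\<alpha> i) * D q"
    using assms(1) by (intro eventually_ball_finite) auto
  moreover have "\<forall>\<^sub>F q in nhds p. D q < e" using order_tendstoD(2)[OF D \<open>e > 0\<close>] .
  ultimately show ?thesis
  proof eventually_elim
    case (elim q)
    show ?case
    proof
      assume "\<exists>z. \<forall>i\<in>I. \<alpha> i \<bullet> z \<le> \<beta> i \<bullet> q + \<gamma> i"
      then obtain z where "\<forall>i\<in>I. \<alpha> i \<bullet> z \<le> f i q" by (auto simp: f_def)
      moreover have "\<forall>i\<in>J. \<alpha> i \<bullet> x = f i p" by (simp add: J_def)
      moreover have "\<forall>i\<in>I - J. \<alpha> i \<bullet> x \<le> f i q - norm (\<alpha> i) * D q"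
        using elim(1) by (simp add: less_imp_le)
      ultimately obtain x' where "\<forall>i\<in>I. \<alpha> i \<bullet> x' \<le> f i q" "norm (x' - x) \<le> D q"
        using hoffman_perturbation[OF c \<open>J \<subseteq> I\<close>, of x "\<lambda>i. f i p" "\<lambda>i. f i q" z]
        unfolding D_def by blast
      then show "\<exists>x'. (\<forall>i\<in>I. \<alpha> i \<bullet> x' \<le> \<beta> i \<bullet> q + \<gamma> i) \<and> dist x' x < e"
        using elim(2) by (auto simp: f_def dist_norm)
    qed
  qed
qed

lemma polyhedron_fibres_lsc:
  fixes \<Gamma> :: "('a::euclidean_space \<times> 'b::euclidean_space) set"
  assumes "polyhedron \<Gamma>" "(p, x) \<in> \<Gamma>" "e > 0"
  shows "\<forall>\<^sub>F q in nhds p. \<Gamma> `` {q} \<noteq> {} \<longrightarrow> (\<exists>x'\<in>\<Gamma> `` {q}. dist x' x < e)"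
proof -
  obtain F :: "('a \<times> 'b) set set" and a b where "finite F" "\<Gamma> = {z. \<forall>h\<in>F. a h \<bullet> z \<le> b h}"
    using polyhedron_halfspace_repr[OF assms(1)] .
  moreover have "a h \<bullet> (q, z) = fst (a h) \<bullet> q + snd (a h) \<bullet> z" for h q z
    by (metis inner_Pair prod.collapse)
  ultimately have \<Gamma>: "(q, z) \<in> \<Gamma> \<longleftrightarrow> (\<forall>h\<in>F. snd (a h) \<bullet> z \<le> (- fst (a h)) \<bullet> q + b h)" for q z
    by (auto simp: algebra_simps)
  show ?thesis
    using affine_system_solutions_lsc[OF \<open>finite F\<close> _ \<open>e > 0\<close>, of "snd \<circ> a" x "uminus \<circ> fst \<circ> a" p b]
      assms(2) by (simp add: \<Gamma> Image_singleton)
qed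

section \<open>Continuity of closest points in the fibres of a polyhedron\<close>

lemma closed_Image_singleton: "closed \<Gamma> \<Longrightarrow> closed (\<Gamma> `` {q})"
proof -
  assume "closed \<Gamma>"
  moreover have "\<Gamma> `` {q} = Pair q -` \<Gamma>" by auto
  ultimately show ?thesis by (simp add: continuous_closed_vimage continuous_intros)
qed

lemma convex_Image_singleton:
  assumes "convex \<Gamma>"
  shows "convex (\<Gamma> `` {q})"
proof (rule convexI)
  fix x y and u v :: real
  assume "x \<in> \<Gamma> `` {q}" "y \<in> \<Gamma> `` {q}" "0 \<le> u" "0 \<le> v" "u + v = 1"
  then have "u *\<^sub>R (q, x) + v *\<^sub>R (q, y) \<in> \<Gamma>" by (intro convexD[OF assms]) auto
  then show "u *\<^sub>R x + v *\<^sub>R y \<in> \<Gamma> `` {q}"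
    using \<open>u + v = 1\<close> by (simp flip: scaleR_add_left)
qed

lemma closest_point_fibre_limit:
  fixes \<Gamma> :: "('a::euclidean_space \<times> 'a) set"
  assumes \<Gamma>: "polyhedron \<Gamma>" and v: "v \<longlonglongrightarrow> p" "\<And>n. \<Gamma> `` {v n} \<noteq> {}"
    and lim: "(\<lambda>n. closest_point (\<Gamma> `` {v n}) (v n)) \<longlonglongrightarrow> l"
  shows "l = closest_point (\<Gamma> `` {p}) p"
proof -
  define y where "y n = closest_point (\<Gamma> `` {v n}) (v n)" for n
  have "closed \<Gamma>" "convex \<Gamma>" using \<Gamma> by (simp_all add: polyhedron_imp_closed polyhedron_imp_convex)
  then have y: "(v n, y n) \<in> \<Gamma>" "\<forall>w\<in>\<Gamma> `` {v n}. dist (v n) (y n) \<le> dist (v n) w" for n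
    using closest_point_exists[OF closed_Image_singleton v(2)] by (auto simp: y_def)
  have "(\<lambda>n. (v n, y n)) \<longlonglongrightarrow> (p, l)" using v(1) lim by (simp add: y_def tendsto_Pair)
  then have "(p, l) \<in> \<Gamma>" using closed_sequentially[OF \<open>closed \<Gamma>\<close>, of "\<lambda>n. (v n, y n)"] y(1) by blast
  moreover have "dist p l \<le> dist p w" if "w \<in> \<Gamma> `` {p}" for w
  proof (rule field_le_epsilon)
    fix \<eta> :: real assume "\<eta> > 0"
    have "\<forall>\<^sub>F n in sequentially. \<exists>w'\<in>\<Gamma> `` {v n}. dist w' w < \<eta>"
      using eventually_compose_filterlim[OF polyhedron_fibres_lsc[OF \<Gamma> _ \<open>\<eta> > 0\<close>] v(1)] that v(2)
      by simp
    then have le: "\<forall>\<^sub>F n in sequentially. dist (v n) (y n) \<le> dist (v n) w + \<eta>"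
    proof eventually_elim
      case (elim n)
      then obtain w' where "w' \<in> \<Gamma> `` {v n}" "dist w' w < \<eta>" by blast
      then have "dist (v n) (y n) \<le> dist (v n) w'" "dist w w' < \<eta>"
        using y(2)[of n] by (auto simp: dist_commute)
      then show ?case using dist_triangle[of "v n" w' w] by linarith
    qed
    have "(\<lambda>n. dist (v n) w + \<eta>) \<longlonglongrightarrow> dist p w + \<eta>" using v(1) by (intro tendsto_intros)
    moreover have "(\<lambda>n. dist (v n) (y n)) \<longlonglongrightarrow> dist p l" using v(1) lim by (simp add: y_def tendsto_dist)
    ultimately show "dist p l \<le> dist p w + \<eta>" by (rule tendsto_le[OF trivial_limit_sequentially _ _ le])
  qed
  ultimately show ?thesis
    using closest_point_unique[OF convex_Image_singleton[OF \<open>convex \<Gamma>\<close>]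
        closed_Image_singleton[OF \<open>closed \<Gamma>\<close>], of l p p] by blast
qed

lemma continuous_on_closest_point_fibres:
  fixes \<Gamma> :: "('a::euclidean_space \<times> 'a) set"
  assumes \<Gamma>: "polyhedron \<Gamma>" and "compact B"
    and fibres: "\<And>q. q \<in> P \<Longrightarrow> \<Gamma> `` {q} \<noteq> {}" "\<And>q. q \<in> P \<Longrightarrow> \<Gamma> `` {q} \<subseteq> B"
  shows "continuous_on P (\<lambda>q. closest_point (\<Gamma> `` {q}) q)"
proof -
  define f where "f q = closest_point (\<Gamma> `` {q}) q" for q
  have "f q \<in> \<Gamma> `` {q}" if "q \<in> P" for q
    using closest_point_in_set[OF closed_Image_singleton fibres(1)[OF that]] \<Gamma>
    by (simp add: f_def polyhedron_imp_closed)
  then have fB: "f \<in> P \<rightarrow> B" using fibres(2) by blast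
  have "closedin (top_of_set (P \<times> B)) ((\<lambda>q. (q, f q)) ` P)"
    unfolding closedin_limpt
  proof (intro conjI allI impI)
    show "(\<lambda>q. (q, f q)) ` P \<subseteq> P \<times> B" using fB by auto
    fix z assume z: "z islimpt (\<lambda>q. (q, f q)) ` P \<and> z \<in> P \<times> B"
    then have "fst z \<in> P" by auto
    obtain s where s: "\<forall>n. s n \<in> (\<lambda>q. (q, f q)) ` P - {z}" "s \<longlonglongrightarrow> z"
      using z islimpt_sequential by meson
    define v where "v n = fst (s n)" for n
    have vP: "v n \<in> P" and s_eq: "s n = (v n, f (v n))" for n
      using s(1)[rule_format, of n] by (auto simp: v_def)
    have "v \<longlonglongrightarrow> fst z" unfolding v_def by (rule tendsto_fst[OF s(2)])
    moreover have "(\<lambda>n. f (v n)) \<longlonglongrightarrow> snd z" using tendsto_snd[OF s(2)] by (simp add: s_eq)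
    ultimately have "snd z = f (fst z)"
      unfolding f_def by (rule closest_point_fibre_limit[OF \<Gamma> _ fibres(1)[OF vP]])
    then have "z = (fst z, f (fst z))" by (simp add: prod_eq_iff)
    then show "z \<in> (\<lambda>q. (q, f q)) ` P" using \<open>fst z \<in> P\<close> by (rule image_eqI)
  qed
  then show ?thesis
    unfolding f_def[symmetric] using continuous_closed_graph_eq[OF \<open>compact B\<close> fB] by blast
qed

section \<open>The base map\<close>

definition base_feasible :: "'a::real_vector set \<Rightarrow> ('a \<times> 'a) set" where
  "base_feasible P = {(q, x). x \<in> K P \<and> q - x \<in> char_cone P}"

lemma finite_vertices_polyhedron:
  fixes P :: "'a::euclidean_space set"
  shows "polyhedron P \<Longrightarrow> finite (vertices P)"
  by (simp add: vertices_def finite_polyhedron_extreme_points)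

lemma compact_K:
  fixes P :: "'a::euclidean_space set"
  shows "polyhedron P \<Longrightarrow> compact (K P)"
  unfolding K_def by (rule compact_convex_hull, rule finite_imp_compact, rule finite_vertices_polyhedron)

lemma polyhedron_base_feasible:
  fixes P :: "'a::euclidean_space set"
  assumes "polyhedron P"
  shows "polyhedron (base_feasible P)"
proof -
  have "base_feasible P = snd -` K P \<inter> (\<lambda>z. fst z - snd z) -` char_cone P"
    by (auto simp: base_feasible_def)
  moreover have "polyhedron (K P)"
    unfolding K_def using assms by (intro polyhedron_convex_hull finite_vertices_polyhedron)
  moreover have "linear (snd :: 'a \<times> 'a \<Rightarrow> 'a)" "linear (\<lambda>z::'a \<times> 'a. fst z - snd z)"
    by (auto simp: linear_iff algebra_simps)
  ultimately show ?thesis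
    using assms by (simp add: polyhedron_linear_vimage polyhedron_char_cone)
qed

lemma base_eq_closest_point:
  fixes P :: "'a::euclidean_space set"
  assumes "polyhedron P" "pointed P" "q \<in> P"
  shows "base P q = closest_point (base_feasible P `` {q}) q"
proof -
  define S where "S = base_feasible P `` {q}"
  have S: "x \<in> S \<longleftrightarrow> x \<in> K P \<and> q - x \<in> char_cone P" for x
    by (simp add: S_def base_feasible_def)
  have "closed S" "convex S"
    using polyhedron_base_feasible[OF assms(1)] unfolding S_def
    by (simp_all add: closed_Image_singleton convex_Image_singleton
        polyhedron_imp_closed polyhedron_imp_convex)
  moreover have "S \<noteq> {}" using pointed_polyhedron_decomposition[OF assms] S by blast
  ultimately have "closest_point S q \<in> S" "\<forall>y\<in>S. norm (q - closest_point S q) \<le> norm (q - y)"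
    using closest_point_exists[of S q] by (auto simp: dist_norm)
  moreover have "x = closest_point S q" if "x \<in> S" "\<forall>y\<in>S. norm (q - x) \<le> norm (q - y)" for x
    using closest_point_unique[OF \<open>convex S\<close> \<open>closed S\<close> that(1), of q] that(2) by (simp add: dist_norm)
  moreover have "(x \<in> K P \<and> q - x \<in> char_cone P \<and>
      (\<forall>y\<in>K P. q - y \<in> char_cone P \<longrightarrow> norm (q - x) \<le> norm (q - y))) \<longleftrightarrow>
      x \<in> S \<and> (\<forall>y\<in>S. norm (q - x) \<le> norm (q - y))" for x
    using S by blast
  ultimately show ?thesis
    unfolding base_def S_def[symmetric] by (intro the_equality) blast+
qed

theorem mainTheorem10:
  fixes P :: "(real ^ 'n) set"
  assumes "polyhedron P"
    and "pointed P"
    and "aff_dim P = int CARD('n)"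
  shows "continuous_on P (base P)"
proof -
  have "continuous_on P (\<lambda>q. closest_point (base_feasible P `` {q}) q)"
  proof (rule continuous_on_closest_point_fibres[OF polyhedron_base_feasible[OF assms(1)] compact_K[OF assms(1)]])
    fix q assume "q \<in> P"
    then show "base_feasible P `` {q} \<noteq> {}"
      using pointed_polyhedron_decomposition[OF assms(1,2)] by (auto simp: base_feasible_def)
    show "base_feasible P `` {q} \<subseteq> K P" by (auto simp: base_feasible_def)
  qed
  then show ?thesis
    by (rule continuous_on_eq) (simp add: base_eq_closest_point[OF assms(1,2)])
qed

end
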